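(* The multiset $\{1,1,1,-1\}$ is not the spectrum of any completely positive trace-preserving linear map on $\mathcal{M}_2(\mathbb{C})$, but there is a completely positive trace-preserving linear map $T$ on $\mathcal{M}_4(\mathbb{C})$ with $\mathrm{spec}(T)\setminus\{0\}=\{1,1,1,-1\}$.
   Context: $\mathrm{spec}(T)$ is the spectrum of $T$ as an operator on $\mathcal{M}_d(\mathbb{C})$ counted with algebraic multiplicity; $\mathrm{spec}(T)\setminus\{0\}$ removes all zeros. Completely positive: $T\otimes\mathrm{id}$ maps positive semidefinite matrices to positive semidefinite ones; trace-preserving: $\mathrm{tr}[T(X)]=\mathrm{tr}[X]$. *)

theory Defs
  imports "Jordan_Normal_Form.Matrix" "Jordan_Normal_Form.Char_Poly"
begin

definition lin_map_Md :: "nat \<Rightarrow> (complex mat \<Rightarrow> complex mat) \<Rightarrow> bool" where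
  "lin_map_Md d T \<longleftrightarrow>
     (\<forall>X \<in> carrier_mat d d. T X \<in> carrier_mat d d) \<and>
     (\<forall>X \<in> carrier_mat d d. \<forall>Y \<in> carrier_mat d d. T (X + Y) = T X + T Y) \<and>
     (\<forall>c. \<forall>X \<in> carrier_mat d d. T (c \<cdot>\<^sub>m X) = c \<cdot>\<^sub>m T X)"

definition unit_mat :: "nat \<Rightarrow> nat \<Rightarrow> nat \<Rightarrow> complex mat" where
  "unit_mat d i j = mat d d (\<lambda>(a, b). if a = i \<and> b = j then 1 else 0)"

text \<open>Matrix of T w.r.t. the basis (E_ij), index i*d+j (row-major vectorisation).\<close>
definition rep_mat :: "nat \<Rightarrow> (complex mat \<Rightarrow> complex mat) \<Rightarrow> complex mat" where
  "rep_mat d T = mat (d*d) (d*d)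
     (\<lambda>(r, s). T (unit_mat d (s div d) (s mod d)) $$ (r div d, r mod d))"

definition spec_op :: "nat \<Rightarrow> (complex mat \<Rightarrow> complex mat) \<Rightarrow> complex multiset" where
  "spec_op d T = proots (char_poly (rep_mat d T))"

definition psd :: "nat \<Rightarrow> complex mat \<Rightarrow> bool" where
  "psd n A \<longleftrightarrow> A \<in> carrier_mat n n \<and>
     (\<forall>v :: nat \<Rightarrow> complex. \<exists>r::real. r \<ge> 0 \<and>
        (\<Sum>i<n. \<Sum>j<n. cnj (v i) * A $$ (i, j) * v j) = complex_of_real r)"

text \<open>(T \<otimes> id_k) applied to X \<in> M_d \<otimes> M_k = M_{dk}, index (i,a) \<mapsto> i*k+a.\<close>
definition tensor_id :: "nat \<Rightarrow> nat \<Rightarrow> (complex mat \<Rightarrow> complex mat) \<Rightarrow> complex mat \<Rightarrow> complex mat" where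
  "tensor_id d k T X = mat (d*k) (d*k) (\<lambda>(r, s).
      T (mat d d (\<lambda>(i, j). X $$ (i*k + r mod k, j*k + s mod k))) $$ (r div k, s div k))"

definition completely_positive :: "nat \<Rightarrow> (complex mat \<Rightarrow> complex mat) \<Rightarrow> bool" where
  "completely_positive d T \<longleftrightarrow>
     (\<forall>k. \<forall>X. psd (d*k) X \<longrightarrow> psd (d*k) (tensor_id d k T X))"

definition trace_preserving :: "nat \<Rightarrow> (complex mat \<Rightarrow> complex mat) \<Rightarrow> bool" where
  "trace_preserving d T \<longleftrightarrow> (\<forall>X \<in> carrier_mat d d. (\<Sum>i<d. T X $$ (i, i)) = (\<Sum>i<d. X $$ (i, i)))"

definition CPTP :: "nat \<Rightarrow> (complex mat \<Rightarrow> complex mat) \<Rightarrow> bool" where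
  "CPTP d T \<longleftrightarrow> lin_map_Md d T \<and> completely_positive d T \<and> trace_preserving d T"

end

theory Submission
  imports Defs "Jordan_Normal_Form.Schur_Decomposition"
begin

(* Impossibility for d = 2.  A linear map T on M_d is described by its coordinates
  T(E_ab)_pq, which are at the same time the entries of its operator matrix rep_mat d T
  and of its Choi matrix C = (T (x) id)(sum_ij E_ij (x) E_ij).  From spec T = {1,1,1,-1}
  we get tr T = 2 (trace = sum of eigenvalues) and an eigenvector for -1.  Complete
  positivity makes C psd, hence Hermitian, hence T Hermiticity preserving, so the
  eigenvector can be chosen Hermitian; trace preservation makes it traceless.  For such an
  H on C^2 one computes <vec H, C vec H> = -s tr T = -2 s with H^2 = s I, s > 0, contradicting
  positivity of C.

  Existence for d = 4.  The classical channel X |-> diag(X00, X11, X33, X22) (measure, then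
  swap the outcomes 2 and 3) is completely positive and trace preserving for general
  reasons; its operator matrix is block diagonal and its nonzero spectrum is {1,1,1,-1}. *)

lemma sum_lessThan_2: "(\<Sum>i<(2::nat). f i) = f 0 + f 1"
  by (simp add: numeral_2_eq_2)

lemma sum_lessThan_4: "(\<Sum>i<(4::nat). f i) = f 0 + f 1 + f 2 + f 3"
  by (simp add: eval_nat_numeral)

lemma index_div_mod:
  assumes "b < (d::nat)"
  shows "(a * d + b) div d = a" "(a * d + b) mod d = b"
  using assms by auto

lemma index_less:
  assumes "a < n" "b < (d::nat)"
  shows "a * d + b < n * d"
proof -
  have "a * d + b < (a + 1) * d" using assms by simp
  also have "\<dots> \<le> n * d" using assms by (intro mult_right_mono) auto
  finally show ?thesis .
qed

lemma sum_lessThan_mult: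
  "(\<Sum>r<n*d. (f::nat \<Rightarrow> 'b::comm_monoid_add) r) = (\<Sum>a<n. \<Sum>b<d. f (a*d + b))"
proof -
  have "(\<Sum>r<n*d. f r) = (\<Sum>a<n. sum f {a*d..<a*d+d})" by (rule sum.nat_group[symmetric])
  also have "\<dots> = (\<Sum>a<n. \<Sum>b<d. f (a*d + b))"
  proof (rule sum.cong[OF refl])
    show "sum f {a*d..<a*d+d} = (\<Sum>b<d. f (a*d + b))" for a
      using sum.shift_bounds_nat_ivl[of f 0 "a*d" d] by (simp add: atLeast0LessThan add.commute)
  qed
  finally show ?thesis .
qed

lemma if_zero_simps:
  fixes x y :: complex
  shows "x * (if P then y else 0) = (if P then x * y else 0)"
    and "(if P then y else 0) * x = (if P then y * x else 0)"
    and "cnj (if P then y else 0) = (if P then cnj y else 0)"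
  by auto

definition quad_form :: "nat \<Rightarrow> complex mat \<Rightarrow> (nat \<Rightarrow> complex) \<Rightarrow> complex" where
  "quad_form n A v = (\<Sum>r<n. \<Sum>s<n. cnj (v r) * A $$ (r, s) * v s)"

lemma psd_iff_quad_form:
  "psd n A \<longleftrightarrow> A \<in> carrier_mat n n \<and> (\<forall>v. \<exists>r::real. r \<ge> 0 \<and> quad_form n A v = of_real r)"
  unfolding psd_def quad_form_def by simp

(* A positive semidefinite matrix is Hermitian: test the quadratic form on vectors
  supported on the two coordinates i and j. *)
lemma psd_hermitian:
  assumes "psd n A" "i < n" "j < n"
  shows "A $$ (i, j) = cnj (A $$ (j, i))"
proof -
  let ?v = "\<lambda>\<alpha> \<beta> k. (if k = i then \<alpha> else 0) + (if k = j then \<beta> else 0)"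
  have real: "Im (quad_form n A v) = 0" for v
  proof -
    obtain r :: real where "quad_form n A v = of_real r"
      using assms(1) unfolding psd_iff_quad_form by blast
    then show ?thesis by simp
  qed
  have inner: "(\<Sum>b<n. A $$ (a, b) * ?v \<alpha> \<beta> b) = A $$ (a, i) * \<alpha> + A $$ (a, j) * \<beta>" for a \<alpha> \<beta>
    using assms(2,3) by (simp add: distrib_left sum.distrib if_zero_simps)
  have outer: "(\<Sum>a<n. cnj (?v \<alpha> \<beta> a) * g a) = cnj \<alpha> * g i + cnj \<beta> * g j" for g \<alpha> \<beta>
    using assms(2,3) by (simp add: distrib_right sum.distrib if_zero_simps)
  have form: "quad_form n A (?v \<alpha> \<beta>) = cnj \<alpha> * (A $$ (i, i) * \<alpha> + A $$ (i, j) * \<beta>)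
      + cnj \<beta> * (A $$ (j, i) * \<alpha> + A $$ (j, j) * \<beta>)" for \<alpha> \<beta>
    unfolding quad_form_def by (simp only: mult.assoc sum_distrib_left[symmetric] inner outer)
  have "Im (A $$ (i, i)) = 0" using real[of "?v 1 0"] unfolding form by simp
  moreover have "Im (A $$ (j, j)) = 0" using real[of "?v 0 1"] unfolding form by simp
  ultimately have "Im (A $$ (i, j) + A $$ (j, i)) = 0" "Re (A $$ (i, j)) - Re (A $$ (j, i)) = 0"
    using real[of "?v 1 1"] real[of "?v 1 \<i>"] unfolding form by (simp_all add: algebra_simps)
  then show ?thesis by (intro complex_eqI) auto
qed

definition mat_trace :: "'a::comm_ring_1 mat \<Rightarrow> 'a" where
  "mat_trace A = (\<Sum>i<dim_row A. A $$ (i, i))"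

lemma mat_trace_mult_comm:
  fixes A B :: "'a::comm_ring_1 mat"
  assumes "A \<in> carrier_mat n m" "B \<in> carrier_mat m n"
  shows "mat_trace (A * B) = mat_trace (B * A)"
proof -
  have "mat_trace (A * B) = (\<Sum>i<n. \<Sum>j<m. A $$ (i, j) * B $$ (j, i))"
    using assms unfolding mat_trace_def
    by (intro sum.cong) (auto simp: scalar_prod_def atLeast0LessThan)
  also have "\<dots> = (\<Sum>j<m. \<Sum>i<n. B $$ (j, i) * A $$ (i, j))"
    by (subst sum.swap) (simp add: mult.commute)
  also have "\<dots> = mat_trace (B * A)"
    using assms unfolding mat_trace_def
    by (intro sum.cong) (auto simp: scalar_prod_def atLeast0LessThan)
  finally show ?thesis .
qed

lemma mat_trace_similar:
  fixes A B :: "'a::comm_ring_1 mat"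
  assumes "similar_mat_wit A B P Q"
  shows "mat_trace A = mat_trace B"
proof -
  obtain n where A: "A \<in> carrier_mat n n" and B: "B \<in> carrier_mat n n"
    and P: "P \<in> carrier_mat n n" and Q: "Q \<in> carrier_mat n n"
    and QP: "Q * P = 1\<^sub>m n" and APBQ: "A = P * (B * Q)"
    using assms unfolding similar_mat_wit_def Let_def
    by (metis assoc_mult_mat carrier_matI insert_subset)
  have "mat_trace A = mat_trace (B * Q * P)"
    using mat_trace_mult_comm[OF P, of "B * Q"] B Q unfolding APBQ by auto
  also have "B * Q * P = B"
    using B P Q QP by (simp add: assoc_mult_mat[of _ n n _ n _ n])
  finally show ?thesis .
qed

lemma proots_linear_prod: "proots (\<Prod>a\<leftarrow>as. [:- a, 1:]) = mset (as :: 'a::idom list)"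
proof (induction as)
  case (Cons a as)
  have "(\<Prod>b\<leftarrow>as. [:- b, 1:]) \<noteq> 0" by (auto simp: prod_list_zero_iff)
  then have "proots ([:- a, 1:] * (\<Prod>b\<leftarrow>as. [:- b, 1:])) = {#a#} + mset as"
    by (subst proots_mult) (simp_all add: Cons.IH)
  then show ?case by simp
qed simp

(* The trace of a complex matrix is the sum of its eigenvalues counted with algebraic
  multiplicity (Schur triangularisation). *)
lemma mat_trace_eq_sum_eigenvalues:
  fixes A :: "complex mat"
  assumes A: "A \<in> carrier_mat n n"
  shows "mat_trace A = sum_mset (proots (char_poly A))"
proof -
  obtain as where char: "char_poly A = (\<Prod>a\<leftarrow>as. [:- a, 1:])"
    using char_poly_factorized[OF A] by blast
  obtain B P Q where schur: "schur_decomposition A as = (B, P, Q)"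
    by (cases "schur_decomposition A as") auto
  have sim: "similar_mat_wit A B P Q" and diag: "diag_mat B = as"
    using schur_decomposition[OF A char schur] by auto
  have "mat_trace A = mat_trace B" by (rule mat_trace_similar[OF sim])
  also have "\<dots> = sum_list (diag_mat B)"
    unfolding mat_trace_def diag_mat_def
    by (simp add: sum_set_upt_conv_sum_list_nat[symmetric] atLeast0LessThan)
  also have "\<dots> = sum_mset (proots (char_poly A))"
    unfolding char proots_linear_prod diag by (simp add: sum_mset_sum_list)
  finally show ?thesis .
qed

lemma eigenvalue_of_root:
  fixes A :: "complex mat"
  assumes A: "A \<in> carrier_mat n n" and root: "z \<in># proots (char_poly A)"
  shows "eigenvalue A z"
proof -
  have "char_poly A \<noteq> 0" using degree_monic_char_poly[OF A] by auto
  then show ?thesis using root eigenvalue_root_char_poly[OF A] by simp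
qed

(* The coordinates of a map T on M_d: the (p, q) entry of T(E_ab).  They are the entries of
  rep_mat d T as well as of the Choi matrix of T, which is what links spectrum and positivity. *)
definition map_entry :: "nat \<Rightarrow> (complex mat \<Rightarrow> complex mat) \<Rightarrow> nat \<Rightarrow> nat \<Rightarrow> nat \<Rightarrow> nat \<Rightarrow> complex" where
  "map_entry d T a b p q = T (unit_mat d a b) $$ (p, q)"

lemma index_decompose:
  assumes "s < d * (d::nat)"
  shows "s div d < d" "s mod d < d" "(s div d) * d + s mod d = s"
proof -
  have "d > 0" using assms by (cases d) auto
  then show "s div d < d" "s mod d < d" "(s div d) * d + s mod d = s"
    using assms by (auto simp: less_mult_imp_div_less)
qed

lemma rep_mat_entry:
  assumes "r < d * d" "s < d * d"
  shows "rep_mat d T $$ (r, s) = map_entry d T (s div d) (s mod d) (r div d) (r mod d)"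
  using assms unfolding rep_mat_def map_entry_def by simp

lemma mat_trace_rep_mat: "mat_trace (rep_mat d T) = (\<Sum>a<d. \<Sum>b<d. map_entry d T a b a b)"
proof -
  have dim: "dim_row (rep_mat d T) = d * d" by (simp add: rep_mat_def)
  show ?thesis
    unfolding mat_trace_def dim sum_lessThan_mult
    by (intro sum.cong refl) (simp add: rep_mat_entry index_less index_div_mod)
qed

lemma trace_preserving_entries:
  assumes "trace_preserving d T" "a < d" "b < d"
  shows "(\<Sum>p<d. map_entry d T a b p p) = (if a = b then 1 else 0)"
proof -
  have "(\<Sum>p<d. map_entry d T a b p p) = (\<Sum>p<d. unit_mat d a b $$ (p, p))"
    using assms(1) unfolding trace_preserving_def map_entry_def by (simp add: unit_mat_def)
  also have "\<dots> = (if a = b then 1 else 0)"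
    using assms(2,3) by (simp add: unit_mat_def)
  finally show ?thesis .
qed

lemma eigenvalue_rep_mat_coords:
  assumes "eigenvalue (rep_mat d T) \<mu>"
  obtains Y where "\<And>p q. p < d \<Longrightarrow> q < d \<Longrightarrow>
      (\<Sum>i<d. \<Sum>j<d. map_entry d T i j p q * Y i j) = \<mu> * Y p q"
    and "\<exists>i<d. \<exists>j<d. Y i j \<noteq> 0"
proof -
  let ?R = "rep_mat d T"
  have R: "?R \<in> carrier_mat (d*d) (d*d)" by (simp add: rep_mat_def)
  obtain y where y: "y \<in> carrier_vec (d*d)" "y \<noteq> 0\<^sub>v (d*d)" "?R *\<^sub>v y = \<mu> \<cdot>\<^sub>v y"
    using assms R unfolding eigenvalue_def eigenvector_def by auto
  define Y where "Y i j = y $ (i*d + j)" for i j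
  show ?thesis
  proof
    fix p q assume pq: "p < d" "q < d"
    have "\<mu> * Y p q = (?R *\<^sub>v y) $ (p*d + q)"
      using y index_less[OF pq] unfolding Y_def by simp
    also have "\<dots> = (\<Sum>s<d*d. ?R $$ (p*d + q, s) * y $ s)"
      using R y(1) index_less[OF pq] by (simp add: scalar_prod_def atLeast0LessThan)
    also have "\<dots> = (\<Sum>i<d. \<Sum>j<d. map_entry d T i j p q * Y i j)"
      unfolding sum_lessThan_mult using pq
      by (intro sum.cong refl) (simp add: rep_mat_entry index_less index_div_mod Y_def)
    finally show "(\<Sum>i<d. \<Sum>j<d. map_entry d T i j p q * Y i j) = \<mu> * Y p q" by simp
  next
    show "\<exists>i<d. \<exists>j<d. Y i j \<noteq> 0"
    proof (rule ccontr)
      assume "\<not> ?thesis"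
      then have "y $ s = 0" if "s < d * d" for s
        using index_decompose[OF that] unfolding Y_def by metis
      then have "y = 0\<^sub>v (d*d)" using y(1) by (intro eq_vecI) auto
      with y(2) show False by contradiction
    qed
  qed
qed

(* The (unnormalised) maximally entangled projector  sum_ij E_ij (x) E_ij  on C^d (x) C^d,
  and the Choi matrix of T, obtained by applying T (x) id to it. *)
definition max_entangled :: "nat \<Rightarrow> complex mat" where
  "max_entangled d = mat (d*d) (d*d) (\<lambda>(r, s). if r div d = r mod d \<and> s div d = s mod d then 1 else 0)"

definition choi_mat :: "nat \<Rightarrow> (complex mat \<Rightarrow> complex mat) \<Rightarrow> complex mat" where
  "choi_mat d T = tensor_id d d T (max_entangled d)"

(* The maximally entangled projector is psd: its quadratic form is a squared modulus. *)
lemma psd_max_entangled: "psd (d*d) (max_entangled d)"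
  unfolding psd_iff_quad_form
proof (intro conjI allI)
  show "max_entangled d \<in> carrier_mat (d*d) (d*d)" by (simp add: max_entangled_def)
  fix v :: "nat \<Rightarrow> complex"
  define S where "S = (\<Sum>r<d*d. if r div d = r mod d then v r else 0)"
  have "quad_form (d*d) (max_entangled d) v = cnj S * S"
    unfolding quad_form_def S_def cnj_sum sum_product
    by (intro sum.cong refl) (auto simp: max_entangled_def)
  also have "\<dots> = of_real ((cmod S)\<^sup>2)" by (subst complex_norm_square) (rule mult.commute)
  finally show "\<exists>r::real. r \<ge> 0 \<and> quad_form (d*d) (max_entangled d) v = of_real r"
    by (intro exI[of _ "(cmod S)\<^sup>2"]) simp
qed

lemma choi_mat_entry:
  assumes "r < d * d" "s < d * d"
  shows "choi_mat d T $$ (r, s) = map_entry d T (r mod d) (s mod d) (r div d) (s div d)"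
proof -
  have "mat d d (\<lambda>(i, j). max_entangled d $$ (i*d + r mod d, j*d + s mod d)) = unit_mat d (r mod d) (s mod d)"
    using index_decompose[OF assms(1)] index_decompose[OF assms(2)]
    by (intro eq_matI) (auto simp: max_entangled_def unit_mat_def index_less index_div_mod)
  then show ?thesis using assms unfolding choi_mat_def tensor_id_def map_entry_def by simp
qed

lemma choi_mat_psd:
  assumes "completely_positive d T"
  shows "psd (d*d) (choi_mat d T)"
  using assms psd_max_entangled unfolding completely_positive_def choi_mat_def by blast

lemma map_entry_hermitian:
  assumes "completely_positive d T" "a < d" "b < d" "p < d" "q < d"
  shows "map_entry d T a b p q = cnj (map_entry d T b a q p)"
  using psd_hermitian[OF choi_mat_psd[OF assms(1)], of "p*d + a" "q*d + b"] assms(2-)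
  by (simp add: choi_mat_entry index_less index_div_mod)

(* For a Hermiticity-preserving map, a real eigenvalue has a Hermitian eigenvector: with Y
  also its adjoint Y' is an eigenvector, hence so are the Hermitian matrices Y + Y' and i (Y - Y'),
  and they are not both zero. *)
lemma hermitian_eigen_solution:
  fixes c :: "nat \<Rightarrow> nat \<Rightarrow> nat \<Rightarrow> nat \<Rightarrow> complex" and \<mu> :: real
  assumes herm: "\<And>a b p q. a < d \<Longrightarrow> b < d \<Longrightarrow> p < d \<Longrightarrow> q < d \<Longrightarrow> c a b p q = cnj (c b a q p)"
    and eig: "\<And>p q. p < d \<Longrightarrow> q < d \<Longrightarrow> (\<Sum>i<d. \<Sum>j<d. c i j p q * Y i j) = of_real \<mu> * Y p q"
    and nonzero: "\<exists>i<d. \<exists>j<d. Y i j \<noteq> 0"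
  obtains H where "\<And>p q. p < d \<Longrightarrow> q < d \<Longrightarrow> (\<Sum>i<d. \<Sum>j<d. c i j p q * H i j) = of_real \<mu> * H p q"
    and "\<And>i j. i < d \<Longrightarrow> j < d \<Longrightarrow> H i j = cnj (H j i)"
    and "\<exists>i<d. \<exists>j<d. H i j \<noteq> 0"
proof -
  define solution where "solution Z \<longleftrightarrow>
      (\<forall>p<d. \<forall>q<d. (\<Sum>i<d. \<Sum>j<d. c i j p q * Z i j) = of_real \<mu> * Z p q)" for Z
  have combination: "solution (\<lambda>i j. \<alpha> * Z i j + \<beta> * W i j)"
    if Z: "solution Z" and W: "solution W" for \<alpha> \<beta> Z W
    unfolding solution_def
  proof (intro allI impI)
    fix p q assume pq: "p < d" "q < d"
    have "(\<Sum>i<d. \<Sum>j<d. c i j p q * (\<alpha> * Z i j + \<beta> * W i j))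
        = \<alpha> * (\<Sum>i<d. \<Sum>j<d. c i j p q * Z i j) + \<beta> * (\<Sum>i<d. \<Sum>j<d. c i j p q * W i j)"
      by (simp add: distrib_left sum.distrib sum_distrib_left mult.left_commute)
    also have "\<dots> = \<alpha> * (of_real \<mu> * Z p q) + \<beta> * (of_real \<mu> * W p q)"
      using Z W pq unfolding solution_def by presburger
    finally show "(\<Sum>i<d. \<Sum>j<d. c i j p q * (\<alpha> * Z i j + \<beta> * W i j))
        = of_real \<mu> * (\<alpha> * Z p q + \<beta> * W p q)"
      by (simp only: distrib_left mult.left_commute)
  qed
  have sol: "solution Y" using eig unfolding solution_def by blast
  have sol_adjoint: "solution (\<lambda>i j. cnj (Y j i))"
    unfolding solution_def
  proof (intro allI impI)
    fix p q assume pq: "p < d" "q < d"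
    have "(\<Sum>i<d. \<Sum>j<d. c i j p q * cnj (Y j i)) = cnj (\<Sum>i<d. \<Sum>j<d. c j i q p * Y j i)"
      unfolding cnj_sum using pq by (intro sum.cong refl) (simp add: herm[of _ _ p q])
    also have "\<dots> = cnj (\<Sum>j<d. \<Sum>i<d. c j i q p * Y j i)" by (subst sum.swap) rule
    also have "\<dots> = of_real \<mu> * cnj (Y q p)" using eig[OF pq(2,1)] by simp
    finally show "(\<Sum>i<d. \<Sum>j<d. c i j p q * cnj (Y j i)) = of_real \<mu> * cnj (Y q p)" .
  qed
  define G where "G i j = Y i j + cnj (Y j i)" for i j
  define K where "K i j = \<i> * Y i j - \<i> * cnj (Y j i)" for i j
  have "solution (\<lambda>i j. 1 * Y i j + 1 * cnj (Y j i))" "solution (\<lambda>i j. \<i> * Y i j + - \<i> * cnj (Y j i))"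
    by (rule combination[OF sol sol_adjoint])+
  moreover have "G = (\<lambda>i j. 1 * Y i j + 1 * cnj (Y j i))" "K = (\<lambda>i j. \<i> * Y i j + - \<i> * cnj (Y j i))"
    unfolding G_def K_def by (simp_all add: fun_eq_iff)
  ultimately have sol_G: "solution G" and sol_K: "solution K" by simp_all
  have herm_G: "G i j = cnj (G j i)" and herm_K: "K i j = cnj (K j i)" for i j
    unfolding G_def K_def by simp_all
  have recover: "2 * Y i j = G i j - \<i> * K i j" for i j
    unfolding G_def K_def by (simp add: algebra_simps)
  have "(\<exists>i<d. \<exists>j<d. G i j \<noteq> 0) \<or> (\<exists>i<d. \<exists>j<d. K i j \<noteq> 0)"
  proof (rule ccontr)
    assume "\<not> ?thesis"
    then have "Y i j = 0" if "i < d" "j < d" for i j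
      using recover[of i j] that by auto
    with nonzero show False by blast
  qed
  then show ?thesis
  proof
    assume "\<exists>i<d. \<exists>j<d. G i j \<noteq> 0"
    with sol_G herm_G show ?thesis unfolding solution_def by (intro that[of G]) blast+
  next
    assume "\<exists>i<d. \<exists>j<d. K i j \<noteq> 0"
    with sol_K herm_K show ?thesis unfolding solution_def by (intro that[of K]) blast+
  qed
qed

(* For a trace-preserving map, an eigenvector to an eigenvalue mu <> 1 is traceless,
  since tr Y = tr T(Y) = mu tr Y. *)
lemma eigen_solution_traceless:
  fixes c :: "nat \<Rightarrow> nat \<Rightarrow> nat \<Rightarrow> nat \<Rightarrow> complex"
  assumes tp: "\<And>a b. a < d \<Longrightarrow> b < d \<Longrightarrow> (\<Sum>p<d. c a b p p) = (if a = b then 1 else 0)"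
    and eig: "\<And>p q. p < d \<Longrightarrow> q < d \<Longrightarrow> (\<Sum>i<d. \<Sum>j<d. c i j p q * H i j) = \<mu> * H p q"
    and "\<mu> \<noteq> 1"
  shows "(\<Sum>p<d. H p p) = 0"
proof -
  have "\<mu> * (\<Sum>p<d. H p p) = (\<Sum>p<d. \<Sum>i<d. \<Sum>j<d. c i j p p * H i j)"
    using eig by (simp add: sum_distrib_left)
  also have "\<dots> = (\<Sum>i<d. \<Sum>j<d. (\<Sum>p<d. c i j p p) * H i j)"
    unfolding sum_distrib_right by (rule trans[OF sum.swap], rule sum.cong[OF refl], rule sum.swap)
  also have "\<dots> = (\<Sum>p<d. H p p)"
    by (intro sum.cong refl) (simp add: tp of_bool_def[symmetric])
  finally show ?thesis using assms(3) by (simp add: algebra_simps)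
qed

lemma qubit_hermitian_square_pos:
  fixes H :: "nat \<Rightarrow> nat \<Rightarrow> complex"
  assumes herm: "\<And>i j. i < 2 \<Longrightarrow> j < 2 \<Longrightarrow> H i j = cnj (H j i)"
    and traceless: "H 0 0 + H 1 1 = 0"
    and nonzero: "\<exists>i<2. \<exists>j<2. H i j \<noteq> 0"
  obtains s :: real where "s > 0" "H 0 0 * H 0 0 + H 0 1 * H 1 0 = of_real s"
proof
  define s where "s = (cmod (H 0 0))\<^sup>2 + (cmod (H 0 1))\<^sup>2"
  have "H 0 0 * H 0 0 = of_real ((cmod (H 0 0))\<^sup>2)"
    using herm[of 0 0, symmetric] complex_norm_square[of "H 0 0"] by simp
  moreover have "H 0 1 * H 1 0 = of_real ((cmod (H 0 1))\<^sup>2)"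
    using herm[of 1 0] complex_norm_square[of "H 0 1"] by simp
  ultimately show "H 0 0 * H 0 0 + H 0 1 * H 1 0 = of_real s" unfolding s_def by simp
  show "s > 0"
  proof (rule ccontr)
    assume "\<not> s > 0"
    then have "H 0 0 = 0" "H 0 1 = 0" unfolding s_def
      by (auto simp: sum_power2_le_zero_iff not_less)
    moreover have "H 1 0 = cnj (H 0 1)" "H 1 1 = - H 0 0"
      using herm[of 1 0] traceless by (auto simp: add_eq_0_iff2)
    ultimately have "H i j = 0" if "i < 2" "j < 2" for i j
      using that by (auto simp: less_2_cases_iff)
    with nonzero show False by blast
  qed
qed

(* Let H be traceless Hermitian 2 x 2, so H^2 = s I with
  s = H00^2 + H01 H10.  The 2 x 2 identity  H M H = s tr(M) I + tr(HM) H - s M  gives, for the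
  Choi matrix C of T,  <vec H, C vec H> = sum_ab (H T(E_ab) H)_ab = 2 s + tr(H T(H)) - s tr(T),
  which is -s tr(T) by trace preservation and T(H) = -H.  In coordinates this is a
  polynomial identity modulo the eigenvector equations and trace preservation. *)
lemma qubit_choi_form:
  fixes c :: "nat \<Rightarrow> nat \<Rightarrow> nat \<Rightarrow> nat \<Rightarrow> complex" and H :: "nat \<Rightarrow> nat \<Rightarrow> complex"
  assumes tp0: "c 0 0 0 0 + c 0 0 1 1 = 1" and tp1: "c 1 1 0 0 + c 1 1 1 1 = 1"
    and eig: "\<And>p q. p < 2 \<Longrightarrow> q < 2 \<Longrightarrow> (\<Sum>i<2. \<Sum>j<2. c i j p q * H i j) = - H p q"
    and herm: "\<And>i j. i < 2 \<Longrightarrow> j < 2 \<Longrightarrow> H i j = cnj (H j i)"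
    and traceless: "H 0 0 + H 1 1 = 0"
  shows "(\<Sum>r<4. \<Sum>s<4. cnj (H (r div 2) (r mod 2)) * c (r mod 2) (s mod 2) (r div 2) (s div 2)
            * H (s div 2) (s mod 2))
       = - (H 0 0 * H 0 0 + H 0 1 * H 1 0) * (\<Sum>a<2. \<Sum>b<2. c a b a b)"
proof -
  define e where "e p q = (\<Sum>i<2. \<Sum>j<2. c i j p q * H i j) + H p q" for p q
  have e0: "e p q = 0" if "p < 2" "q < 2" for p q using eig[OF that] unfolding e_def by simp
  have H11: "H 1 1 = - H 0 0" using traceless by (simp add: add_eq_0_iff2 add.commute)
  have cnjH: "cnj (H 0 0) = H 0 0" "cnj (H 0 1) = H 1 0" "cnj (H 1 0) = H 0 1"
    using herm[of 0 0] herm[of 1 0] herm[of 0 1] by simp_all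
  have "(\<Sum>r<4. \<Sum>s<4. cnj (H (r div 2) (r mod 2)) * c (r mod 2) (s mod 2) (r div 2) (s div 2)
            * H (s div 2) (s mod 2))
        + (H 0 0 * H 0 0 + H 0 1 * H 1 0) * (\<Sum>a<2. \<Sum>b<2. c a b a b)
      = H 0 0 * e 0 0 + H 1 0 * e 0 1 + H 0 1 * e 1 0 - H 0 0 * e 1 1
        + (H 0 0 * H 0 0 + H 0 1 * H 1 0) * ((c 0 0 0 0 + c 0 0 1 1 - 1) + (c 1 1 0 0 + c 1 1 1 1 - 1))"
    unfolding e_def
    by (simp add: sum_lessThan_4 sum_lessThan_2 H11[unfolded One_nat_def]
        cnjH[unfolded One_nat_def] algebra_simps)
  also have "\<dots> = 0" using e0 tp0 tp1 by simp
  finally show ?thesis unfolding mult_minus_left eq_neg_iff_add_eq_0 .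
qed

(* If spec T = {1,1,1,-1} then tr T = 2 and T has a Hermitian
  traceless eigenvector H for -1; evaluating the Choi matrix on vec H gives -2 s < 0,
  contradicting positivity. *)
lemma no_qubit_channel_with_spectrum:
  assumes "CPTP 2 T"
  shows "spec_op 2 T \<noteq> {#1, 1, 1, -1#}"
proof
  assume spec: "spec_op 2 T = {#1, 1, 1, -1#}"
  have cp: "completely_positive 2 T" and tp: "trace_preserving 2 T"
    using assms unfolding CPTP_def by auto
  let ?c = "map_entry 2 T"
  have R: "rep_mat 2 T \<in> carrier_mat (2*2) (2*2)" by (simp add: rep_mat_def)
  have trace: "(\<Sum>a<2. \<Sum>b<2. ?c a b a b) = 2"
    using mat_trace_eq_sum_eigenvalues[OF R] spec unfolding mat_trace_rep_mat spec_op_def by simp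
  have tp_entries: "(\<Sum>p<2. ?c a b p p) = (if a = b then 1 else 0)" if "a < 2" "b < 2" for a b
    using trace_preserving_entries[OF tp that] .
  have "eigenvalue (rep_mat 2 T) (-1)"
    using eigenvalue_of_root[OF R] spec unfolding spec_op_def by simp
  then obtain Y where eigY: "\<And>p q. p < 2 \<Longrightarrow> q < 2 \<Longrightarrow>
      (\<Sum>i<2. \<Sum>j<2. ?c i j p q * Y i j) = -1 * Y p q"
    and nonzeroY: "\<exists>i<2. \<exists>j<2. Y i j \<noteq> 0"
    using eigenvalue_rep_mat_coords by blast
  have eigY': "(\<Sum>i<2. \<Sum>j<2. ?c i j p q * Y i j) = of_real (-1) * Y p q"
    if "p < 2" "q < 2" for p q
    using eigY[OF that] by simp
  obtain H where eigH: "\<And>p q. p < 2 \<Longrightarrow> q < 2 \<Longrightarrow>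
      (\<Sum>i<2. \<Sum>j<2. ?c i j p q * H i j) = of_real (-1) * H p q"
    and herm: "\<And>i j. i < 2 \<Longrightarrow> j < 2 \<Longrightarrow> H i j = cnj (H j i)"
    and nonzero: "\<exists>i<2. \<exists>j<2. H i j \<noteq> 0"
    using hermitian_eigen_solution[OF map_entry_hermitian[OF cp] eigY' nonzeroY] by blast
  have eig: "(\<Sum>i<2. \<Sum>j<2. ?c i j p q * H i j) = - H p q" if "p < 2" "q < 2" for p q
    using eigH[OF that] by simp
  have "(\<Sum>p<2. H p p) = 0"
    by (rule eigen_solution_traceless[where d = 2 and c = ?c and H = H and \<mu> = "-1"])
       (simp_all add: tp_entries eig)
  then have traceless: "H 0 0 + H 1 1 = 0" by (simp add: sum_lessThan_2)
  obtain s where s: "s > 0" "H 0 0 * H 0 0 + H 0 1 * H 1 0 = of_real s"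
    using qubit_hermitian_square_pos[OF herm traceless nonzero] by blast
  define u where "u r = H (r div 2) (r mod 2)" for r
  have "quad_form 4 (choi_mat 2 T) u = - (H 0 0 * H 0 0 + H 0 1 * H 1 0) * (\<Sum>a<2. \<Sum>b<2. ?c a b a b)"
    unfolding quad_form_def u_def
    using qubit_choi_form[OF _ _ eig herm traceless] tp_entries[of 0 0] tp_entries[of 1 1]
    by (simp add: choi_mat_entry sum_lessThan_2)
  also have "\<dots> = of_real (- 2 * s)" unfolding s(2) trace by simp
  finally have "quad_form 4 (choi_mat 2 T) u = of_real (- 2 * s)" .
  moreover obtain r :: real where r: "r \<ge> 0" "quad_form 4 (choi_mat 2 T) u = of_real r"
    using choi_mat_psd[OF cp] unfolding psd_iff_quad_form by auto
  ultimately have "r = - 2 * s" by (metis of_real_eq_iff)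
  with r(1) s(1) show False by simp
qed

(* The classical channel that measures in the standard basis and relabels the outcomes:
  X maps to the diagonal matrix with entries X_(sigma i, sigma i). *)
definition relabel_channel :: "nat \<Rightarrow> (nat \<Rightarrow> nat) \<Rightarrow> complex mat \<Rightarrow> complex mat" where
  "relabel_channel d \<sigma> X = mat d d (\<lambda>(i, j). if i = j then X $$ (\<sigma> i, \<sigma> i) else 0)"

lemma relabel_channel_linear:
  assumes "\<And>i. i < d \<Longrightarrow> \<sigma> i < d"
  shows "lin_map_Md d (relabel_channel d \<sigma>)"
  unfolding lin_map_Md_def relabel_channel_def using assms by (auto intro!: eq_matI)

lemma relabel_channel_trace_preserving:
  assumes "bij_betw \<sigma> {..<d} {..<d}"
  shows "trace_preserving d (relabel_channel d \<sigma>)"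
  unfolding trace_preserving_def
proof
  fix X :: "complex mat"
  have "(\<Sum>i<d. relabel_channel d \<sigma> X $$ (i, i)) = (\<Sum>i<d. X $$ (\<sigma> i, \<sigma> i))"
    by (simp add: relabel_channel_def)
  also have "\<dots> = (\<Sum>i<d. X $$ (i, i))"
    by (rule sum.reindex_bij_betw[OF assms, of "\<lambda>i. X $$ (i, i)"])
  finally show "(\<Sum>i<d. relabel_channel d \<sigma> X $$ (i, i)) = (\<Sum>i<d. X $$ (i, i))" .
qed

lemma quad_form_split:
  "quad_form (n*k) A v = (\<Sum>p<n. \<Sum>a<k. \<Sum>q<n. \<Sum>b<k.
      cnj (v (p*k + a)) * A $$ (p*k + a, q*k + b) * v (q*k + b))"
  unfolding quad_form_def by (simp add: sum_lessThan_mult)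

lemma relabel_tensor_entry:
  assumes "\<sigma> p < d" "p < d" "q < d" "a < k" "b < k"
  shows "tensor_id d k (relabel_channel d \<sigma>) X $$ (p*k + a, q*k + b)
       = (if p = q then X $$ (\<sigma> p * k + a, \<sigma> p * k + b) else 0)"
  using assms index_less[of p d a k] index_less[of q d b k]
  unfolding tensor_id_def relabel_channel_def by (auto simp: index_div_mod)

lemma relabel_tensor_quad_form:
  assumes \<sigma>: "\<And>i. i < d \<Longrightarrow> \<sigma> i < d"
  shows "quad_form (d*k) (tensor_id d k (relabel_channel d \<sigma>) X) v
       = (\<Sum>p<d. quad_form (d*k) X (\<lambda>r. if r div k = \<sigma> p then v (p*k + r mod k) else 0))"
proof -
  have sum_if: "(\<Sum>x\<in>A. if P then f x else 0) = (if P then sum f A else 0)" for A P and f :: "nat \<Rightarrow> complex"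
    by auto
  have "quad_form (d*k) (tensor_id d k (relabel_channel d \<sigma>) X) v
      = (\<Sum>p<d. \<Sum>a<k. \<Sum>q<d. if q = p then
          (\<Sum>b<k. cnj (v (p*k + a)) * X $$ (\<sigma> p * k + a, \<sigma> p * k + b) * v (p*k + b)) else 0)"
    unfolding quad_form_split using \<sigma>
    by (intro sum.cong refl) (auto simp: relabel_tensor_entry)
  also have "\<dots> = (\<Sum>p<d. \<Sum>a<k. \<Sum>b<k. cnj (v (p*k + a)) * X $$ (\<sigma> p * k + a, \<sigma> p * k + b) * v (p*k + b))"
    by simp
  also have "\<dots> = (\<Sum>p<d. quad_form (d*k) X (\<lambda>r. if r div k = \<sigma> p then v (p*k + r mod k) else 0))"
    unfolding quad_form_split
    by (rule sum.cong[OF refl]) (simp add: \<sigma> index_div_mod if_zero_simps sum_if cong: if_cong)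
  finally show ?thesis .
qed

lemma relabel_channel_completely_positive:
  assumes "\<And>i. i < d \<Longrightarrow> \<sigma> i < d"
  shows "completely_positive d (relabel_channel d \<sigma>)"
  unfolding completely_positive_def
proof (intro allI impI)
  fix k X assume "psd (d*k) X"
  then obtain r where r: "\<And>v. r v \<ge> 0" "\<And>v. quad_form (d*k) X v = of_real (r v)"
    unfolding psd_iff_quad_form by metis
  show "psd (d*k) (tensor_id d k (relabel_channel d \<sigma>) X)"
    unfolding psd_iff_quad_form
  proof (intro conjI allI)
    show "tensor_id d k (relabel_channel d \<sigma>) X \<in> carrier_mat (d*k) (d*k)"
      by (simp add: tensor_id_def)
    fix v :: "nat \<Rightarrow> complex"
    let ?w = "\<lambda>p r. if r div k = \<sigma> p then v (p*k + r mod k) else 0"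
    have "quad_form (d*k) (tensor_id d k (relabel_channel d \<sigma>) X) v = of_real (\<Sum>p<d. r (?w p))"
      using relabel_tensor_quad_form[where k = k and X = X and v = v, OF assms] by (simp add: r(2))
    moreover have "(\<Sum>p<d. r (?w p)) \<ge> 0" using r(1) by (simp add: sum_nonneg)
    ultimately show "\<exists>s::real. s \<ge> 0 \<and> quad_form (d*k) (tensor_id d k (relabel_channel d \<sigma>) X) v = of_real s"
      by blast
  qed
qed

definition swap23 :: "nat \<Rightarrow> nat" where
  "swap23 i = (if i = 2 then 3 else if i = 3 then 2 else i)"

definition swap_channel :: "complex mat \<Rightarrow> complex mat" where
  "swap_channel = relabel_channel 4 swap23"

lemma swap23_less: "i < 4 \<Longrightarrow> swap23 i < 4"
  unfolding swap23_def by auto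

lemma swap23_bij: "bij_betw swap23 {..<4} {..<4}"
  by (rule bij_betwI[of _ _ _ swap23]) (auto simp: swap23_def)

lemma swap_channel_CPTP: "CPTP 4 swap_channel"
  unfolding CPTP_def swap_channel_def
  using relabel_channel_linear relabel_channel_completely_positive relabel_channel_trace_preserving
    swap23_less swap23_bij by blast

lemma rep_mat_relabel_channel:
  assumes "\<And>i. i < d \<Longrightarrow> \<sigma> i < d" "r < d * d" "s < d * d"
  shows "rep_mat d (relabel_channel d \<sigma>) $$ (r, s)
       = (if r div d = r mod d \<and> \<sigma> (r div d) = s div d \<and> \<sigma> (r div d) = s mod d then 1 else 0)"
  using assms index_decompose[OF assms(2)] index_decompose[OF assms(3)]
  unfolding rep_mat_def relabel_channel_def unit_mat_def by auto

lemma swap_channel_support: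
  assumes "r < 16" "s < 16"
  shows "(r div 4 = r mod 4 \<and> swap23 (r div 4) = s div 4 \<and> swap23 (r div 4) = s mod 4) \<longleftrightarrow>
    (r = 0 \<and> s = 0) \<or> (r = 5 \<and> s = 5) \<or> (r = 10 \<and> s = 15) \<or> (r = 15 \<and> s = 10)"
proof -
  have "r \<in> {0..<16}" "s \<in> {0..<16}" using assms by auto
  then show ?thesis
    unfolding atLeastLessThan_upt by (simp add: upt_rec swap23_def) (elim disjE; simp)
qed

(* The matrix with ones in the two off-diagonal corners; its characteristic polynomial is
  x^n (x - 1)(x + 1), the 2 x 2 case being similar to diag(1, -1) and the induction step
  deleting a zero column. *)
definition corner_mat :: "nat \<Rightarrow> complex mat" where
  "corner_mat n = mat (n+2) (n+2) (\<lambda>(i, j). if (i = 0 \<and> j = n+1) \<or> (i = n+1 \<and> j = 0) then 1 else 0)"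

lemma char_poly_corner_mat_0: "char_poly (corner_mat 0) = [:-1, 1:] * [:1, 1:]"
proof -
  define P :: "complex mat" where "P = mat 2 2 (\<lambda>(i, j). if i = 1 \<and> j = 1 then -1 else 1)"
  define Q :: "complex mat" where "Q = mat 2 2 (\<lambda>(i, j). if i = 1 \<and> j = 1 then -1/2 else 1/2)"
  define B :: "complex mat" where "B = mat 2 2 (\<lambda>(i, j). if i = j then (if i = 0 then 1 else -1) else 0)"
  have "P * Q = 1\<^sub>m 2" "Q * P = 1\<^sub>m 2" "P * B * Q = corner_mat 0"
    unfolding P_def Q_def B_def corner_mat_def
    by (rule eq_matI; auto simp: scalar_prod_def sum_lessThan_2 less_2_cases_iff atLeast0LessThan)+
  moreover have "P \<in> carrier_mat 2 2" "Q \<in> carrier_mat 2 2" "B \<in> carrier_mat 2 2"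
    "corner_mat 0 \<in> carrier_mat 2 2"
    by (simp_all add: P_def Q_def B_def corner_mat_def numeral_2_eq_2)
  ultimately have "similar_mat_wit (corner_mat 0) B P Q"
    unfolding similar_mat_wit_def Let_def by auto
  then have "char_poly (corner_mat 0) = char_poly B"
    by (intro char_poly_similar) (auto simp: similar_mat_def)
  also have "\<dots> = (\<Prod>a\<leftarrow>diag_mat B. [:- a, 1:])"
    by (rule char_poly_upper_triangular[of _ 2]) (auto simp: B_def upper_triangular_def)
  also have "\<dots> = [:-1, 1:] * [:1, 1:]" by (simp add: B_def diag_mat_def upt_rec)
  finally show ?thesis .
qed

lemma char_poly_corner_mat: "char_poly (corner_mat n) = [:0, 1:] ^ n * ([:-1, 1:] * [:1, 1:])"
proof (induction n)
  case 0
  then show ?case by (simp add: char_poly_corner_mat_0)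
next
  case (Suc n)
  have "char_poly (corner_mat (Suc n)) = monom 1 1 * char_poly (mat_delete (corner_mat (Suc n)) 1 1)"
    by (rule char_poly_0_column[of "Suc n + 2"]) (auto simp: corner_mat_def)
  also have "mat_delete (corner_mat (Suc n)) 1 1 = corner_mat n"
    unfolding mat_delete_def corner_mat_def by (rule eq_matI) auto
  also have "monom 1 1 = ([:0, 1:] :: complex poly)" by (simp only: x_as_monom)
  finally show ?case by (simp only: Suc.IH power_Suc mult.assoc)
qed

definition diag_block :: "complex mat" where
  "diag_block = mat 10 10 (\<lambda>(i, j). if i = j \<and> (i = 0 \<or> i = 5) then 1 else 0)"

lemma rep_mat_swap_channel:
  "rep_mat 4 swap_channel = four_block_mat diag_block (0\<^sub>m 10 6) (0\<^sub>m 6 10) (corner_mat 4)"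
proof (rule eq_matI)
  fix r s
  assume "r < dim_row (four_block_mat diag_block (0\<^sub>m 10 6) (0\<^sub>m 6 10) (corner_mat 4))"
    and "s < dim_col (four_block_mat diag_block (0\<^sub>m 10 6) (0\<^sub>m 6 10) (corner_mat 4))"
  then have r: "r < 16" and s: "s < 16" by (simp_all add: diag_block_def corner_mat_def)
  have "rep_mat 4 swap_channel $$ (r, s)
      = (if (r = 0 \<and> s = 0) \<or> (r = 5 \<and> s = 5) \<or> (r = 10 \<and> s = 15) \<or> (r = 15 \<and> s = 10) then 1 else 0)"
    using rep_mat_relabel_channel[of 4 swap23 r s] swap23_less swap_channel_support[OF r s] r s
    unfolding swap_channel_def by simp
  also have "\<dots> = four_block_mat diag_block (0\<^sub>m 10 6) (0\<^sub>m 6 10) (corner_mat 4) $$ (r, s)"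
    using r s by (auto simp: diag_block_def corner_mat_def)
  finally show "rep_mat 4 swap_channel $$ (r, s)
      = four_block_mat diag_block (0\<^sub>m 10 6) (0\<^sub>m 6 10) (corner_mat 4) $$ (r, s)" .
qed (simp_all add: rep_mat_def diag_block_def corner_mat_def)

lemma char_poly_swap_channel:
  "char_poly (rep_mat 4 swap_channel)
     = (\<Prod>a\<leftarrow>diag_mat diag_block @ replicate 4 0 @ [1, -1]. [:- a, 1:])"
proof -
  have B: "diag_block \<in> carrier_mat 10 10" and D: "corner_mat 4 \<in> carrier_mat 6 6"
    by (simp_all add: diag_block_def corner_mat_def)
  have "char_poly (rep_mat 4 swap_channel) = char_poly diag_block * char_poly (corner_mat 4)"
    unfolding rep_mat_swap_channel
    by (rule char_poly_0_block[OF refl _ _ B _ D])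
       (use char_poly_factorized[OF B] char_poly_factorized[OF D] in auto)
  also have "char_poly diag_block = (\<Prod>a\<leftarrow>diag_mat diag_block. [:- a, 1:])"
    by (rule char_poly_upper_triangular[OF B]) (simp add: diag_block_def upper_triangular_def)
  finally show ?thesis by (simp add: char_poly_corner_mat prod_list_replicate)
qed

lemma swap_channel_spectrum: "filter_mset (\<lambda>z. z \<noteq> 0) (spec_op 4 swap_channel) = {#1, 1, 1, -1#}"
proof -
  have "diag_mat diag_block = [1, 0, 0, 0, 0, 1, 0, 0, 0, 0]"
    by (simp add: diag_block_def diag_mat_def upt_rec)
  then show ?thesis unfolding spec_op_def char_poly_swap_channel proots_linear_prod by simp
qed

theorem mainTheorem12:
  shows "(\<not> (\<exists>T. CPTP 2 T \<and> spec_op 2 T = {#1, 1, 1, -1#})) \<and>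
         (\<exists>T. CPTP 4 T \<and> filter_mset (\<lambda>z. z \<noteq> 0) (spec_op 4 T) = {#1, 1, 1, -1#})"
  using no_qubit_channel_with_spectrum swap_channel_CPTP swap_channel_spectrum by blast

end
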